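(* Let $\lambda_1,\lambda_2\in\mathbb{D}$, let $(s,p)=(\lambda_1+\lambda_2,\lambda_1\lambda_2)$ (so $(s,p)\in\mathbb{G}$), let $\beta=\dfrac{s-\bar s p}{1-|p|^2}$ (so that $\beta\in\mathbb{D}$ and $s=\beta+\bar\beta p$), and let $a\in\mathbb{C}$. The following statements are equivalent: (1) $(a,s,p)\in\mathcal{P}$; (2) $(a,s,p)\in\mathcal{P}_\mu$; (3) $|a|<\left|1-\dfrac{\tfrac12 s\bar\beta}{1+\sqrt{1-|\beta|^2}}\right|$; (4) $|a|<\tfrac12|1-\bar\lambda_2\lambda_1|+\tfrac12(1-|\lambda_1|^2)^{1/2}(1-|\lambda_2|^2)^{1/2}$; (5) $\sup_{z\in\mathbb{D}}|\Psi_z(a,s,p)|<1$. In particular $\mathcal{P}=\mathcal{P}_\mu$.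
   Context: $\mathbb{D}$ is the open unit disc; $\mathbb{G}=\{(z+w,zw):|z|<1,|w|<1\}$. $\mathbb{B}$ is the open unit ball of $\mathbb{C}^{2\times2}$ in the operator norm. $\pi:\mathbb{C}^{2\times 2}\to\mathbb{C}^3$ is $\pi(A)=(a_{21},\operatorname{tr}A,\det A)$ for $A=[a_{ij}]$, and the pentablock is $\mathcal{P}=\pi(\mathbb{B})$. Let $E=\{\begin{pmatrix}z&w\\0&z\end{pmatrix}: z,w\in\mathbb{C}\}$ and $1/\mu_E(A)=\inf\{\|X\|:X\in E,\ \det(I-AX)=0\}$ ($\mu_E(A)=0$ if no such $X$). $\mathcal{P}_\mu=\{\pi(A): A\in\mathbb{C}^{2\times2},\ \mu_E(A)<1\}$. For $z\in\mathbb{D}$ and $(a,s,p)$ with $1-sz+pz^2\ne0$, $\Psi_z(a,s,p)=\dfrac{a(1-|z|^2)}{1-sz+pz^2}$. *)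

theory Defs
  imports "HOL-Analysis.Analysis"
begin

type_synonym cmat2 = "complex ^ 2 ^ 2"

definition opnorm :: "cmat2 \<Rightarrow> real" where
  "opnorm M = onorm (\<lambda>x::complex^2. M *v x)"

definition unit_ball_mat :: "cmat2 set" where
  "unit_ball_mat = {A. opnorm A < 1}"

definition pi_map :: "cmat2 \<Rightarrow> complex \<times> complex \<times> complex" where
  "pi_map A = (A $ 2 $ 1, A $ 1 $ 1 + A $ 2 $ 2, det A)"

definition pentablock :: "(complex \<times> complex \<times> complex) set" where
  "pentablock = pi_map ` unit_ball_mat"

definition symmetrized_bidisc :: "(complex \<times> complex) set" where
  "symmetrized_bidisc = {(z + w, z * w) | z w. norm z < 1 \<and> norm w < 1}"

definition E_space :: "cmat2 set" where
  "E_space = {X. \<exists>z w. X = (\<chi> i j. if i = j then z else if i = 1 \<and> j = 2 then w else 0)}"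

definition singular_set :: "cmat2 \<Rightarrow> cmat2 set" where
  "singular_set A = {X \<in> E_space. det (mat 1 - A ** X) = 0}"

text \<open>mu_E(A) = 1 / inf{||X|| : X in E, det(I - A X) = 0}, and 0 if no such X.
  (The infimum is always positive, since det(I - A X) = 1 at X = 0.)\<close>
definition mu_E :: "cmat2 \<Rightarrow> real" where
  "mu_E A = (if singular_set A = {} then 0 else 1 / Inf (opnorm ` singular_set A))"

definition pentablock_mu :: "(complex \<times> complex \<times> complex) set" where
  "pentablock_mu = pi_map ` {A. mu_E A < 1}"

definition Psi :: "complex \<Rightarrow> complex \<Rightarrow> complex \<Rightarrow> complex \<Rightarrow> complex" where
  "Psi z a s p = a * (1 - of_real ((cmod z)^2)) / (1 - s * z + p * z^2)"

end

theory Submission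
  imports Defs
begin

text \<open>If \<open>\<mu>\<^sub>E(A) < 1\<close> then \<open>\<bar>a\<^sub>2\<^sub>1\<bar> (1 - \<bar>z\<bar>\<^sup>2) < \<bar>1 - tr A z + det A z\<^sup>2\<bar>\<close> on the closed disc,
  since otherwise a Toeplitz matrix \<open>[[z, w], [0, z]]\<close> of norm at most 1 would make \<open>I - A X\<close>
  singular. With \<open>tr A = \<lambda>\<^sub>1 + \<lambda>\<^sub>2\<close>, \<open>det A = \<lambda>\<^sub>1\<lambda>\<^sub>2\<close> the right-hand side is
  \<open>\<bar>(1 - \<lambda>\<^sub>1 z)(1 - \<lambda>\<^sub>2 z)\<bar> \<ge> K (1 - \<bar>z\<bar>\<^sup>2)\<close>, \<open>K\<close> being the bound in (4), by the triangle and
  Aczel inequalities; equality holds at \<open>z\<^sub>0 = cnj \<beta> / (1 + \<surd>(1 - \<bar>\<beta>\<bar>\<^sup>2))\<close>, where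
  \<open>1 - s z\<^sub>0 + p z\<^sub>0\<^sup>2\<close> factors as the expression in (3) times \<open>1 - \<bar>z\<^sub>0\<bar>\<^sup>2\<close>. This gives \<open>\<bar>a\<bar> < K\<close>
  on \<open>\<P>\<^sub>\<mu>\<close>, identifies \<open>K\<close> with (3), and shows \<open>sup \<bar>\<Psi>\<^sub>z\<bar> = \<bar>a\<bar> / K\<close>. Conversely every \<open>\<bar>a\<bar> < K\<close>
  is the \<open>(2,1)\<close> entry of an explicit matrix with the given trace and determinant whose Frobenius
  norm is below \<open>1 + \<bar>det\<bar>\<^sup>2\<close>, which for \<open>2 \<times> 2\<close> matrices forces operator norm below 1; and
  \<open>\<P> \<subseteq> \<P>\<^sub>\<mu>\<close> because \<open>\<parallel>A\<parallel> \<parallel>X\<parallel> \<ge> 1\<close> whenever \<open>I - A X\<close> is singular.\<close>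

lemma lagrange_identity_complex:
  fixes u1 u2 w1 w2 :: complex
  shows "((cmod u1)^2 + (cmod u2)^2) * ((cmod w1)^2 + (cmod w2)^2)
       = (cmod (u1 * w2 - u2 * w1))^2 + (cmod (u1 * cnj w1 + u2 * cnj w2))^2"
  by (rule of_real_eq_iff[where 'a = complex, THEN iffD1])
    (unfold of_real_add of_real_mult complex_norm_square, simp add: algebra_simps)

lemma norm_sq_sum_orthogonal_pair:
  fixes a b c d x1 x2 :: complex
  shows "((cmod (a * x1 + b * x2))^2 + (cmod (c * x1 + d * x2))^2)
       + ((cmod (- a * cnj x2 + b * cnj x1))^2 + (cmod (- c * cnj x2 + d * cnj x1))^2)
     = ((cmod a)^2 + (cmod b)^2 + (cmod c)^2 + (cmod d)^2) * ((cmod x1)^2 + (cmod x2)^2)"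
  by (rule of_real_eq_iff[where 'a = complex, THEN iffD1])
    (unfold of_real_add of_real_mult complex_norm_square, simp add: algebra_simps)

lemma norm_sq_vec2: "(norm (x :: complex^2))^2 = (cmod (x$1))^2 + (cmod (x$2))^2"
  by (simp add: norm_vec_def L2_set_def sum_2)

lemma matrix_vector_mult_2:
  "((A :: cmat2) *v v) $ 1 = A$1$1 * v$1 + A$1$2 * v$2"
  "((A :: cmat2) *v v) $ 2 = A$2$1 * v$1 + A$2$2 * v$2"
  by (simp_all add: matrix_vector_mult_def sum_2)

definition frob_sq :: "cmat2 \<Rightarrow> real" where
  "frob_sq A = (cmod (A$1$1))^2 + (cmod (A$1$2))^2 + (cmod (A$2$1))^2 + (cmod (A$2$2))^2"

text \<open>The larger root of \<open>t\<^sup>2 - frob_sq A * t + \<bar>det A\<bar>\<^sup>2\<close>, the characteristic polynomial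
  of \<open>A\<^sup>* A\<close>; its square root is the operator norm, but only the upper bound is needed.\<close>
definition top_singular_sq :: "cmat2 \<Rightarrow> real" where
  "top_singular_sq A = (frob_sq A + sqrt ((frob_sq A)^2 - 4 * (cmod (det A))^2)) / 2"

lemma le_larger_root:
  fixes X Y N F d :: real
  assumes "N \<ge> 0" "X + Y = F * N" "d^2 * N^2 \<le> X * Y"
  shows "X \<le> (F + sqrt (F^2 - 4 * d^2)) / 2 * N"
proof -
  have "(2 * X - F * N)^2 = (X + Y)^2 - 4 * (X * Y)"
    using assms(2)[symmetric] by (simp add: power2_eq_square algebra_simps)
  also have "\<dots> \<le> (F^2 - 4 * d^2) * N^2"
    using assms(2,3) by (simp add: power2_eq_square algebra_simps)
  finally have "2 * X - F * N \<le> sqrt ((F^2 - 4 * d^2) * N^2)"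
    by (metis real_le_rsqrt)
  also have "\<dots> = sqrt (F^2 - 4 * d^2) * N"
    using assms(1) by (simp add: real_sqrt_mult)
  finally show ?thesis by (simp add: algebra_simps)
qed

text \<open>Pair \<open>x\<close> with the orthogonal vector \<open>(-cnj x\<^sub>2, cnj x\<^sub>1)\<close>: the two image norms add up
  to \<open>frob_sq A * \<parallel>x\<parallel>\<^sup>2\<close>, and by Lagrange's identity their product is at least
  \<open>\<bar>det A\<bar>\<^sup>2 \<parallel>x\<parallel>\<^sup>4\<close>.\<close>
lemma norm_mult_vec_sq_le: "(norm ((A :: cmat2) *v x))^2 \<le> top_singular_sq A * (norm x)^2"
proof -
  define u1 where "u1 = A$1$1 * x$1 + A$1$2 * x$2"
  define u2 where "u2 = A$2$1 * x$1 + A$2$2 * x$2"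
  define w1 where "w1 = - A$1$1 * cnj (x$2) + A$1$2 * cnj (x$1)"
  define w2 where "w2 = - A$2$1 * cnj (x$2) + A$2$2 * cnj (x$1)"
  define X where "X = (cmod u1)^2 + (cmod u2)^2"
  define Y where "Y = (cmod w1)^2 + (cmod w2)^2"
  define N where "N = (norm x)^2"
  have N: "N = (cmod (x$1))^2 + (cmod (x$2))^2"
    unfolding N_def norm_sq_vec2 ..
  have sum: "X + Y = frob_sq A * N"
    unfolding X_def Y_def N frob_sq_def u1_def u2_def w1_def w2_def
    by (rule norm_sq_sum_orthogonal_pair)
  have "u1 * w2 - u2 * w1 = det A * complex_of_real N"
    unfolding u1_def u2_def w1_def w2_def det_2 N of_real_add complex_norm_square
    by (simp add: algebra_simps)
  moreover have "N \<ge> 0"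
    by (simp add: N_def)
  ultimately have "cmod (u1 * w2 - u2 * w1) = cmod (det A) * N"
    by (simp add: norm_mult)
  then have prod: "(cmod (det A))^2 * N^2 \<le> X * Y"
    using lagrange_identity_complex[of u1 u2 w1 w2] unfolding X_def Y_def
    by (simp add: power_mult_distrib)
  have "X \<le> top_singular_sq A * N"
    unfolding top_singular_sq_def by (rule le_larger_root[OF _ sum prod]) (simp add: N_def)
  then show ?thesis
    by (simp add: X_def N_def norm_sq_vec2 matrix_vector_mult_2 u1_def u2_def)
qed

lemma opnorm_le_sqrt_top_singular_sq: "opnorm A \<le> sqrt (top_singular_sq A)"
  unfolding opnorm_def
proof (rule onorm_le)
  fix x :: "complex^2"
  have "norm (A *v x) \<le> sqrt (top_singular_sq A * (norm x)^2)"
    using norm_mult_vec_sq_le real_le_rsqrt by blast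
  then show "norm (A *v x) \<le> sqrt (top_singular_sq A) * norm x"
    by (simp add: real_sqrt_mult)
qed

lemma larger_root_lt_1:
  fixes F d :: real
  assumes "F < 1 + d^2" "0 \<le> d" "d < 1"
  shows "(F + sqrt (F^2 - 4 * d^2)) / 2 < 1"
proof -
  have "d^2 < 1"
    using assms(2,3) by (simp add: abs_square_less_1)
  then have "F^2 - 4 * d^2 < (2 - F)^2" "0 < 2 - F"
    using assms(1) by (simp_all add: power2_eq_square algebra_simps)
  then have "sqrt (F^2 - 4 * d^2) < 2 - F"
    by (metis real_sqrt_abs real_sqrt_less_mono abs_of_pos)
  then show ?thesis
    by simp
qed

lemma larger_root_le_1:
  fixes F d :: real
  assumes "F \<le> 1 + d^2" "0 \<le> d" "d \<le> 1"
  shows "(F + sqrt (F^2 - 4 * d^2)) / 2 \<le> 1"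
proof -
  have "d^2 \<le> 1"
    using assms(2,3) by (simp add: abs_square_le_1)
  then have "F^2 - 4 * d^2 \<le> (2 - F)^2" "0 \<le> 2 - F"
    using assms(1) by (simp_all add: power2_eq_square algebra_simps)
  then have "sqrt (F^2 - 4 * d^2) \<le> 2 - F"
    by (metis real_sqrt_abs real_sqrt_le_mono abs_of_nonneg)
  then show ?thesis
    by simp
qed

lemma opnorm_lt_1_if_frob_sq:
  assumes "frob_sq A < 1 + (cmod (det A))^2" "cmod (det A) < 1"
  shows "opnorm A < 1"
  using opnorm_le_sqrt_top_singular_sq[of A] larger_root_lt_1[OF assms(1) norm_ge_zero assms(2)]
  unfolding top_singular_sq_def by (meson order_le_less_trans real_sqrt_lt_1_iff)

lemma opnorm_le_1_if_frob_sq: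
  assumes "frob_sq A \<le> 1 + (cmod (det A))^2" "cmod (det A) \<le> 1"
  shows "opnorm A \<le> 1"
  using opnorm_le_sqrt_top_singular_sq[of A] larger_root_le_1[OF assms(1) norm_ge_zero assms(2)]
  unfolding top_singular_sq_def by (meson order_trans real_sqrt_le_1_iff)

lemma opnorm_nonneg: "opnorm A \<ge> 0"
  unfolding opnorm_def by (rule onorm_pos_le) simp

lemma norm_mult_vec_le_opnorm: "norm (A *v x) \<le> opnorm A * norm x"
  unfolding opnorm_def by (rule onorm) simp

lemma opnorm_mult_ge_1_if_singular:
  assumes "det (mat 1 - A ** X) = 0"
  shows "1 \<le> opnorm A * opnorm X"
proof -
  have "\<not> (\<exists>B. B ** (mat 1 - A ** X) = mat 1)"
    using assms invertible_det_nz invertible_left_inverse by blast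
  then obtain x where x: "(mat 1 - A ** X) *v x = 0" "x \<noteq> 0"
    using matrix_left_invertible_ker by blast
  then have "x = A *v (X *v x)"
    by (simp add: matrix_vector_mult_diff_rdistrib matrix_vector_mul_assoc)
  then have "norm x \<le> opnorm A * norm (X *v x)"
    using norm_mult_vec_le_opnorm[of A "X *v x"] by simp
  also have "\<dots> \<le> opnorm A * (opnorm X * norm x)"
    by (intro mult_left_mono norm_mult_vec_le_opnorm opnorm_nonneg)
  finally have "1 * norm x \<le> (opnorm A * opnorm X) * norm x"
    by simp
  then show ?thesis
    using x(2) by (simp add: mult_le_cancel_right)
qed

definition toeplitz :: "complex \<Rightarrow> complex \<Rightarrow> cmat2" where
  "toeplitz z w = (\<chi> i j. if i = j then z else if i = 1 \<and> j = 2 then w else 0)"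

lemma toeplitz_in_E_space: "toeplitz z w \<in> E_space"
  unfolding E_space_def toeplitz_def by blast

lemma det_one_minus_mult_toeplitz:
  "det (mat 1 - A ** toeplitz z w) = 1 - (A$1$1 + A$2$2) * z + det A * z^2 - A$2$1 * w"
  by (simp add: det_2 toeplitz_def matrix_matrix_mult_def sum_2 mat_def power2_eq_square
      algebra_simps)

lemma opnorm_toeplitz_le_1:
  assumes "cmod w \<le> 1 - (cmod z)^2"
  shows "opnorm (toeplitz z w) \<le> 1"
proof (rule opnorm_le_1_if_frob_sq)
  have frob: "frob_sq (toeplitz z w) = 2 * (cmod z)^2 + (cmod w)^2"
    by (simp add: frob_sq_def toeplitz_def)
  have det: "det (toeplitz z w) = z^2"
    by (simp add: det_2 toeplitz_def power2_eq_square)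
  have "(cmod z)^2 \<le> 1"
    using assms norm_ge_zero[of w] by linarith
  then show "cmod (det (toeplitz z w)) \<le> 1"
    by (simp add: det norm_power)
  have "(cmod w)^2 \<le> (1 - (cmod z)^2)^2"
    using assms by (intro power_mono) auto
  then show "frob_sq (toeplitz z w) \<le> 1 + (cmod (det (toeplitz z w)))^2"
    unfolding frob det norm_power by (simp add: power2_eq_square algebra_simps)
qed

lemma opnorm_singular_lower_bound:
  assumes "X \<in> singular_set A"
  shows "0 < opnorm A" "1 / opnorm A \<le> opnorm X"
proof -
  have "1 \<le> opnorm A * opnorm X"
    using assms opnorm_mult_ge_1_if_singular unfolding singular_set_def by blast
  moreover show "0 < opnorm A"
    using calculation opnorm_nonneg[of A] by (cases "opnorm A = 0") auto
  ultimately show "1 / opnorm A \<le> opnorm X"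
    by (simp add: divide_le_eq mult.commute)
qed

lemma mu_E_lt_1_if_opnorm_lt_1:
  assumes "opnorm A < 1"
  shows "mu_E A < 1"
proof (cases "singular_set A = {}")
  case True
  then show ?thesis
    unfolding mu_E_def by simp
next
  case False
  then have "1 / opnorm A \<le> Inf (opnorm ` singular_set A)"
    by (intro cInf_greatest) (use opnorm_singular_lower_bound(2) in auto)
  moreover have "1 < 1 / opnorm A"
    using False opnorm_singular_lower_bound(1) assms by auto
  ultimately have "1 < Inf (opnorm ` singular_set A)"
    by linarith
  then show ?thesis
    using False unfolding mu_E_def by simp
qed

lemma opnorm_gt_1_if_mu_E_lt_1:
  assumes "mu_E A < 1" "X \<in> singular_set A"
  shows "1 < opnorm X"
proof -
  let ?S = "opnorm ` singular_set A"
  have nonempty: "singular_set A \<noteq> {}"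
    using assms(2) by blast
  have "1 / opnorm A \<le> Inf ?S"
    by (intro cInf_greatest) (use nonempty opnorm_singular_lower_bound(2) in auto)
  moreover have "0 < 1 / opnorm A"
    using opnorm_singular_lower_bound(1)[OF assms(2)] by simp
  ultimately have "0 < Inf ?S"
    by linarith
  moreover have "1 / Inf ?S < 1"
    using assms(1) nonempty unfolding mu_E_def by simp
  ultimately have "1 < Inf ?S"
    by (simp add: divide_less_eq)
  also have "Inf ?S \<le> opnorm X"
    by (rule cInf_lower) (use assms(2) opnorm_nonneg in \<open>auto intro!: bdd_belowI[where m=0]\<close>)
  finally show ?thesis .
qed

text \<open>If the bound failed, \<open>w\<close> could be chosen with \<open>\<bar>w\<bar> \<le> 1 - \<bar>z\<bar>\<^sup>2\<close> so that \<open>toeplitz z w\<close> is a singular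
  point of norm at most 1.\<close>
lemma mu_E_lt_1_imp_bound:
  assumes "mu_E A < 1" "cmod z \<le> 1"
  shows "cmod (A$2$1) * (1 - (cmod z)^2) < cmod (1 - (A$1$1 + A$2$2) * z + det A * z^2)"
proof (rule ccontr)
  let ?D = "1 - (A$1$1 + A$2$2) * z + det A * z^2"
  assume "\<not> ?thesis"
  then have le: "cmod ?D \<le> cmod (A$2$1) * (1 - (cmod z)^2)"
    by simp
  define w where "w = ?D / A$2$1"
  have "?D = A$2$1 * w \<and> cmod w \<le> 1 - (cmod z)^2"
  proof (cases "A$2$1 = 0")
    case True
    then show ?thesis
      using le assms(2) by (simp add: w_def abs_square_le_1)
  next
    case False
    then show ?thesis
      using le by (simp add: w_def norm_divide divide_le_eq mult.commute)
  qed
  then have "toeplitz z w \<in> singular_set A" "opnorm (toeplitz z w) \<le> 1"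
    using opnorm_toeplitz_le_1 toeplitz_in_E_space det_one_minus_mult_toeplitz
    unfolding singular_set_def by auto
  then show False
    using opnorm_gt_1_if_mu_E_lt_1[OF assms(1)] by fastforce
qed

definition pentablock_radius :: "complex \<Rightarrow> complex \<Rightarrow> real" where
  "pentablock_radius l1 l2 = cmod (1 - cnj l2 * l1) / 2
     + sqrt (1 - (cmod l1)^2) * sqrt (1 - (cmod l2)^2) / 2"

lemma one_minus_norm_sq_pos: "cmod (l :: complex) < 1 \<Longrightarrow> 0 < 1 - (cmod l)^2"
  by (simp add: abs_square_less_1)

lemma pentablock_radius_pos:
  assumes "cmod l1 < 1" "cmod l2 < 1"
  shows "0 < pentablock_radius l1 l2"
  using one_minus_norm_sq_pos[OF assms(1)] one_minus_norm_sq_pos[OF assms(2)]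
  unfolding pentablock_radius_def by (simp add: add_nonneg_pos)

lemma norm_sq_one_minus_mult_diff:
  "(cmod (1 - l * z))^2 - (cmod (cnj z - l))^2 = (1 - (cmod l)^2) * (1 - (cmod z)^2)"
  by (rule of_real_eq_iff[where 'a = complex, THEN iffD1])
    (unfold of_real_diff of_real_mult complex_norm_square of_real_1, simp add: algebra_simps)

lemma norm_cnj_diff_le:
  assumes "cmod l < 1" "cmod z \<le> 1"
  shows "cmod (cnj z - l) \<le> cmod (1 - l * z)"
proof -
  have "0 \<le> (1 - (cmod l)^2) * (1 - (cmod z)^2)"
    using assms by (intro mult_nonneg_nonneg) (simp_all add: abs_square_le_1)
  then have "(cmod (cnj z - l))^2 \<le> (cmod (1 - l * z))^2"
    using norm_sq_one_minus_mult_diff[of l z] by linarith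
  then show ?thesis
    by (rule power2_le_imp_le) simp
qed

text \<open>Aczel's inequality, via
  \<open>(u\<^sub>1\<^sup>2 - y\<^sub>1\<^sup>2)(u\<^sub>2\<^sup>2 - y\<^sub>2\<^sup>2) = (u\<^sub>1u\<^sub>2 - y\<^sub>1y\<^sub>2)\<^sup>2 - (u\<^sub>1y\<^sub>2 - u\<^sub>2y\<^sub>1)\<^sup>2\<close>.\<close>
lemma aczel_sqrt:
  fixes u1 u2 y1 y2 :: real
  assumes "0 \<le> y1" "y1 \<le> u1" "0 \<le> y2" "y2 \<le> u2"
  shows aczel_sqrt_le: "sqrt (u1^2 - y1^2) * sqrt (u2^2 - y2^2) \<le> u1 * u2 - y1 * y2"
    and aczel_sqrt_eq:
      "u1 * y2 = u2 * y1 \<Longrightarrow> sqrt (u1^2 - y1^2) * sqrt (u2^2 - y2^2) = u1 * u2 - y1 * y2"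
proof -
  have nonneg: "0 \<le> u1 * u2 - y1 * y2"
    using assms mult_mono[of y1 u1 y2 u2] by simp
  have "(u1^2 - y1^2) * (u2^2 - y2^2) = (u1 * u2 - y1 * y2)^2 - (u1 * y2 - u2 * y1)^2"
    by (simp add: power2_eq_square algebra_simps)
  then have eq: "sqrt (u1^2 - y1^2) * sqrt (u2^2 - y2^2)
      = sqrt ((u1 * u2 - y1 * y2)^2 - (u1 * y2 - u2 * y1)^2)"
    by (simp add: real_sqrt_mult[symmetric])
  have "sqrt ((u1 * u2 - y1 * y2)^2 - (u1 * y2 - u2 * y1)^2) \<le> sqrt ((u1 * u2 - y1 * y2)^2)"
    by (rule real_sqrt_le_mono) simp
  then show "sqrt (u1^2 - y1^2) * sqrt (u2^2 - y2^2) \<le> u1 * u2 - y1 * y2"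
    using eq nonneg by simp
  show "u1 * y2 = u2 * y1 \<Longrightarrow> sqrt (u1^2 - y1^2) * sqrt (u2^2 - y2^2) = u1 * u2 - y1 * y2"
    using eq nonneg by simp
qed

lemma pentablock_radius_split:
  assumes "cmod l1 < 1" "cmod l2 < 1" "cmod z \<le> 1"
  shows "2 * (pentablock_radius l1 l2 * (1 - (cmod z)^2))
    = cmod ((1 - l1 * z) * cnj (1 - l2 * z) - (cnj z - l1) * cnj (cnj z - l2))
      + sqrt ((cmod (1 - l1 * z))^2 - (cmod (cnj z - l1))^2)
        * sqrt ((cmod (1 - l2 * z))^2 - (cmod (cnj z - l2))^2)"
proof -
  have z: "0 \<le> 1 - (cmod z)^2"
    using assms(3) by (simp add: abs_square_le_1)
  have "complex_of_real (1 - (cmod z)^2) * (1 - cnj l2 * l1)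
      = (1 - l1 * z) * cnj (1 - l2 * z) - (cnj z - l1) * cnj (cnj z - l2)"
    unfolding of_real_diff complex_norm_square of_real_1 by (simp add: algebra_simps)
  then have c: "cmod (1 - cnj l2 * l1) * (1 - (cmod z)^2)
      = cmod ((1 - l1 * z) * cnj (1 - l2 * z) - (cnj z - l1) * cnj (cnj z - l2))"
    by (metis abs_of_nonneg z mult.commute norm_mult norm_of_real)
  have q: "sqrt (1 - (cmod l1)^2) * sqrt (1 - (cmod l2)^2) * (1 - (cmod z)^2)
      = sqrt ((cmod (1 - l1 * z))^2 - (cmod (cnj z - l1))^2)
        * sqrt ((cmod (1 - l2 * z))^2 - (cmod (cnj z - l2))^2)"
    unfolding norm_sq_one_minus_mult_diff using z by (simp add: real_sqrt_mult mult_ac)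
  have "2 * (pentablock_radius l1 l2 * (1 - (cmod z)^2))
      = cmod (1 - cnj l2 * l1) * (1 - (cmod z)^2)
        + sqrt (1 - (cmod l1)^2) * sqrt (1 - (cmod l2)^2) * (1 - (cmod z)^2)"
    unfolding pentablock_radius_def by (simp add: field_simps)
  then show ?thesis
    using c q by linarith
qed

lemma pentablock_radius_le:
  assumes "cmod l1 < 1" "cmod l2 < 1" "cmod z \<le> 1"
  shows "pentablock_radius l1 l2 * (1 - (cmod z)^2) \<le> cmod ((1 - l1 * z) * (1 - l2 * z))"
proof -
  have "cmod ((1 - l1 * z) * cnj (1 - l2 * z) - (cnj z - l1) * cnj (cnj z - l2))
      \<le> cmod (1 - l1 * z) * cmod (1 - l2 * z) + cmod (cnj z - l1) * cmod (cnj z - l2)"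
    using norm_triangle_ineq4 by (metis complex_mod_cnj norm_mult)
  moreover have "sqrt ((cmod (1 - l1 * z))^2 - (cmod (cnj z - l1))^2)
        * sqrt ((cmod (1 - l2 * z))^2 - (cmod (cnj z - l2))^2)
      \<le> cmod (1 - l1 * z) * cmod (1 - l2 * z) - cmod (cnj z - l1) * cmod (cnj z - l2)"
    using assms by (intro aczel_sqrt_le norm_cnj_diff_le) auto
  ultimately show ?thesis
    using pentablock_radius_split[OF assms] by (simp add: norm_mult)
qed

lemma norm_diff_eq_add_if_opposite:
  fixes A B :: complex
  assumes "B = - of_real t * A" "0 \<le> t"
  shows "cmod (A - B) = cmod A + cmod B"
proof -
  have "A - B = of_real (1 + t) * A"
    using assms(1) by (simp add: algebra_simps)
  then have "cmod (A - B) = \<bar>1 + t\<bar> * cmod A"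
    by (simp only: norm_mult norm_of_real)
  moreover have "cmod B = \<bar>t\<bar> * cmod A"
    unfolding assms(1) by (simp only: norm_minus_cancel norm_mult minus_mult_left norm_of_real)
  ultimately show ?thesis
    using assms(2) by (simp add: algebra_simps)
qed

text \<open>Under the balancing condition the second term subtracted in \<open>pentablock_radius_split\<close>
  is a nonpositive real multiple of the first, and \<open>u\<^sub>1 y\<^sub>2 = u\<^sub>2 y\<^sub>1\<close>, so both the triangle and
  the Aczel inequality are equalities.\<close>
lemma pentablock_radius_eq:
  assumes "cmod l1 < 1" "cmod l2 < 1" "cmod z \<le> 1"
    and balance: "(cnj z - l1) * (1 - l2 * z) = - (cnj z - l2) * (1 - l1 * z)"
  shows "pentablock_radius l1 l2 * (1 - (cmod z)^2) = cmod ((1 - l1 * z) * (1 - l2 * z))"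
proof -
  define A where "A = (1 - l1 * z) * cnj (1 - l2 * z)"
  define B where "B = (cnj z - l1) * cnj (cnj z - l2)"
  have ratio: "cmod (cnj z - l1) * cmod (1 - l2 * z) = cmod (cnj z - l2) * cmod (1 - l1 * z)"
    using arg_cong[OF balance, of cmod] by (simp only: norm_mult norm_minus_cancel minus_mult_left)
  have "cmod (A - B) = cmod A + cmod B"
  proof (cases "1 - l2 * z = 0")
    case True
    then show ?thesis
      by (simp add: A_def)
  next
    case False
    define t where "t = (cmod (cnj z - l2))^2 / (cmod (1 - l2 * z))^2"
    have "B * (1 - l2 * z) = ((cnj z - l1) * (1 - l2 * z)) * cnj (cnj z - l2)"
      by (simp add: B_def mult_ac)
    also have "\<dots> = - of_real ((cmod (cnj z - l2))^2) * (1 - l1 * z)"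
      unfolding balance complex_norm_square by (simp add: algebra_simps)
    also have "\<dots> = - of_real t * (of_real ((cmod (1 - l2 * z))^2) * (1 - l1 * z))"
      using False by (simp add: t_def)
    also have "of_real ((cmod (1 - l2 * z))^2) * (1 - l1 * z) = A * (1 - l2 * z)"
      unfolding A_def complex_norm_square by (simp add: mult_ac)
    finally have "B = - of_real t * A"
      using False by (metis mult.assoc mult_cancel_right)
    then show ?thesis
      by (rule norm_diff_eq_add_if_opposite) (simp add: t_def)
  qed
  moreover have "sqrt ((cmod (1 - l1 * z))^2 - (cmod (cnj z - l1))^2)
        * sqrt ((cmod (1 - l2 * z))^2 - (cmod (cnj z - l2))^2)
      = cmod (1 - l1 * z) * cmod (1 - l2 * z) - cmod (cnj z - l1) * cmod (cnj z - l2)"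
    using assms ratio by (intro aczel_sqrt_eq norm_cnj_diff_le) (auto simp: mult.commute)
  ultimately show ?thesis
    using pentablock_radius_split[OF assms(1-3)] unfolding A_def B_def norm_mult complex_mod_cnj
    by linarith
qed

definition symmetrized_beta :: "complex \<Rightarrow> complex \<Rightarrow> complex" where
  "symmetrized_beta s p = (s - cnj s * p) / (1 - of_real ((cmod p)^2))"

definition extremal_point :: "complex \<Rightarrow> complex" where
  "extremal_point \<beta> = cnj \<beta> / (1 + of_real (sqrt (1 - (cmod \<beta>)^2)))"

lemma norm_mult_lt_1: "cmod (l1 :: complex) < 1 \<Longrightarrow> cmod l2 < 1 \<Longrightarrow> cmod (l1 * l2) < 1"
  unfolding norm_mult by (metis mult_strict_mono' norm_ge_zero mult_1_left)

lemma symmetrized_beta_decomposition: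
  assumes "cmod p < 1"
  shows "s = symmetrized_beta s p + cnj (symmetrized_beta s p) * p"
proof -
  define D where "D = 1 - (cmod p)^2"
  have "0 < D"
    unfolding D_def using assms by (rule one_minus_norm_sq_pos)
  then have D: "complex_of_real D \<noteq> 0"
    by simp
  have \<beta>: "symmetrized_beta s p = (s - cnj s * p) / of_real D"
    unfolding symmetrized_beta_def D_def by simp
  have "symmetrized_beta s p + cnj (symmetrized_beta s p) * p
      = ((s - cnj s * p) + cnj (s - cnj s * p) * p) / of_real D"
    unfolding \<beta> by (simp add: add_divide_distrib)
  also have "(s - cnj s * p) + cnj (s - cnj s * p) * p = s * of_real D"
    unfolding D_def of_real_diff complex_norm_square by (simp add: algebra_simps)
  finally show ?thesis
    using D by simp
qed

lemma norm_symmetrized_beta_lt_1: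
  assumes "cmod l1 < 1" "cmod l2 < 1"
  shows "cmod (symmetrized_beta (l1 + l2) (l1 * l2)) < 1"
proof -
  define p where "p = l1 * l2"
  define s where "s = l1 + l2"
  define D where "D = 1 - (cmod p)^2"
  have D: "0 < D"
    unfolding D_def p_def using assms by (intro one_minus_norm_sq_pos norm_mult_lt_1)
  have eq: "D * D - (cmod (s - cnj s * p))^2
      = (1 - (cmod l1)^2) * (1 - (cmod l2)^2) * (cmod (1 - cnj l1 * l2))^2"
    unfolding D_def s_def p_def
    by (rule of_real_eq_iff[where 'a = complex, THEN iffD1])
      (unfold of_real_diff of_real_mult complex_norm_square of_real_1, simp add: algebra_simps)
  have "cmod (cnj l1 * l2) < 1"
    using assms norm_mult_lt_1[of "cnj l1" l2] by simp
  then have "1 - cnj l1 * l2 \<noteq> 0"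
    by auto
  then have "0 < (1 - (cmod l1)^2) * (1 - (cmod l2)^2) * (cmod (1 - cnj l1 * l2))^2"
    using assms by (intro mult_pos_pos one_minus_norm_sq_pos) auto
  then have "(cmod (s - cnj s * p))^2 < D^2"
    using eq unfolding power2_eq_square[of D] by linarith
  then have "cmod (s - cnj s * p) < D"
    using D by (simp add: power_less_imp_less_base)
  moreover have "1 - complex_of_real ((cmod p)^2) = of_real D"
    unfolding D_def by simp
  ultimately show ?thesis
    using D unfolding symmetrized_beta_def s_def[symmetric] p_def[symmetric]
    by (simp add: norm_divide)
qed

text \<open>With \<open>b = \<beta>\<close>, \<open>c = cnj \<beta>\<close> and \<open>R = \<surd>(1 - \<bar>\<beta>\<bar>\<^sup>2)\<close>, the point \<open>c / (1 + R)\<close> is the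
  extremal point and \<open>b / (1 + R)\<close> its conjugate.\<close>
lemma extremal_balance_identity:
  fixes b c R l1 l2 :: complex
  assumes "b * c = 1 - R^2" "l1 + l2 = b + c * (l1 * l2)" "1 + R \<noteq> 0"
  shows "(b / (1 + R) - l1) * (1 - l2 * (c / (1 + R)))
       = - (b / (1 + R) - l2) * (1 - l1 * (c / (1 + R)))"
proof -
  define w where "w = 1 + R"
  have "2 * b * w - (l1 + l2) * w^2 - b * c * (l1 + l2) + 2 * (l1 * l2) * c * w
      = 2 * w * (b + c * (l1 * l2)) - (l1 + l2) * (w^2 + b * c)"
    by (simp add: algebra_simps)
  also have "\<dots> = 0"
    unfolding assms(1) assms(2)[symmetric] w_def by (simp add: algebra_simps power2_eq_square)
  finally have num: "2 * b * w - (l1 + l2) * w^2 - b * c * (l1 + l2) + 2 * (l1 * l2) * c * w = 0" .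
  have "w \<noteq> 0"
    using assms(3) w_def by simp
  then have "(b / w - l1) * (1 - l2 * (c / w)) + (b / w - l2) * (1 - l1 * (c / w))
      = (2 * b * w - (l1 + l2) * w^2 - b * c * (l1 + l2) + 2 * (l1 * l2) * c * w) / w^2"
    by (simp add: field_simps power2_eq_square)
  then have "(b / w - l1) * (1 - l2 * (c / w)) + (b / w - l2) * (1 - l1 * (c / w)) = 0"
    unfolding num by simp
  then show ?thesis
    unfolding w_def by (metis eq_neg_iff_add_eq_0 minus_mult_left)
qed

lemma extremal_factor_identity:
  fixes b c R s p :: complex
  assumes "b * c = 1 - R^2" "s = b + c * p" "1 + R \<noteq> 0"
  shows "1 - s * (c / (1 + R)) + p * (c / (1 + R))^2
       = (1 - (s * c / 2) / (1 + R)) * (1 - (c / (1 + R)) * (b / (1 + R)))"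
proof -
  define w where "w = 1 + R"
  define X where "X = b * c"
  define Y where "Y = c^2 * p"
  have w: "w \<noteq> 0"
    using assms(3) w_def by simp
  have X: "X = (2 - w) * w"
    unfolding X_def w_def assms(1) by (simp add: algebra_simps power2_eq_square)
  have "1 - s * (c / w) + p * (c / w)^2 = (w^2 - X * w - Y * w + Y) / w^2"
    using w assms(2) unfolding X_def Y_def by (simp add: field_simps power2_eq_square)
  also have "\<dots> = ((2 * w - X - Y) * (w^2 - X)) / (2 * w^3)"
    unfolding X using w by (simp add: field_simps power2_eq_square power3_eq_cube)
  also have "\<dots> = (1 - (s * c / 2) / w) * (1 - (c / w) * (b / w))"
    using w assms(2) unfolding X_def Y_def
    by (simp add: field_simps power2_eq_square power3_eq_cube)
  finally show ?thesis
    unfolding w_def .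
qed

lemma norm_extremal_point_lt_1:
  assumes "cmod \<beta> < 1"
  shows "cmod (extremal_point \<beta>) < 1"
proof -
  define r where "r = sqrt (1 - (cmod \<beta>)^2)"
  have "0 \<le> r"
    unfolding r_def using one_minus_norm_sq_pos[OF assms] by simp
  have of_real_r: "1 + complex_of_real r = of_real (1 + r)"
    by simp
  have "cmod (extremal_point \<beta>) = cmod \<beta> / (1 + r)"
    unfolding extremal_point_def r_def[symmetric] norm_divide of_real_r norm_of_real
    using \<open>0 \<le> r\<close> by simp
  then show ?thesis
    using assms \<open>0 \<le> r\<close> by (simp add: divide_less_eq)
qed

lemma extremal_point_properties:
  fixes l1 l2 :: complex
  assumes l1: "cmod l1 < 1" and l2: "cmod l2 < 1"
    and \<beta>_def: "\<beta> = symmetrized_beta (l1 + l2) (l1 * l2)"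
    and z_def: "z = extremal_point \<beta>"
  shows "cmod z < 1"
    and "pentablock_radius l1 l2 * (1 - (cmod z)^2) = cmod ((1 - l1 * z) * (1 - l2 * z))"
    and "1 - (l1 + l2) * z + (l1 * l2) * z^2
      = (1 - ((l1 + l2) * cnj \<beta> / 2) / (1 + of_real (sqrt (1 - (cmod \<beta>)^2))))
        * of_real (1 - (cmod z)^2)"
proof -
  have \<beta>: "cmod \<beta> < 1"
    unfolding \<beta>_def using l1 l2 by (rule norm_symmetrized_beta_lt_1)
  have decomp: "l1 + l2 = \<beta> + cnj \<beta> * (l1 * l2)"
    unfolding \<beta>_def using l1 l2 by (intro symmetrized_beta_decomposition norm_mult_lt_1)
  show z_lt_1: "cmod z < 1"
    unfolding z_def using \<beta> by (rule norm_extremal_point_lt_1)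
  define r where "r = sqrt (1 - (cmod \<beta>)^2)"
  have "0 \<le> r"
    unfolding r_def using one_minus_norm_sq_pos[OF \<beta>] by simp
  have of_real_r: "1 + complex_of_real r = of_real (1 + r)"
    by simp
  have one_plus_r: "1 + complex_of_real r \<noteq> 0"
    unfolding of_real_r of_real_eq_0_iff using \<open>0 \<le> r\<close> by linarith
  have "complex_of_real r ^ 2 = 1 - \<beta> * cnj \<beta>"
    unfolding r_def of_real_power[symmetric] using one_minus_norm_sq_pos[OF \<beta>]
    by (simp add: complex_norm_square[symmetric])
  then have bc: "\<beta> * cnj \<beta> = 1 - (complex_of_real r)^2"
    by simp
  have z: "z = cnj \<beta> / (1 + of_real r)" and cnj_z: "cnj z = \<beta> / (1 + of_real r)"
    unfolding z_def extremal_point_def r_def by simp_all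
  have "(cnj z - l1) * (1 - l2 * z) = - (cnj z - l2) * (1 - l1 * z)"
    unfolding cnj_z unfolding z by (rule extremal_balance_identity[OF bc decomp one_plus_r])
  then show "pentablock_radius l1 l2 * (1 - (cmod z)^2) = cmod ((1 - l1 * z) * (1 - l2 * z))"
    using l1 l2 z_lt_1 by (intro pentablock_radius_eq) auto
  have "1 - (l1 + l2) * z + (l1 * l2) * z^2
      = (1 - ((l1 + l2) * cnj \<beta> / 2) / (1 + of_real r)) * (1 - z * cnj z)"
    unfolding cnj_z unfolding z by (rule extremal_factor_identity[OF bc decomp one_plus_r])
  also have "1 - z * cnj z = of_real (1 - (cmod z)^2)"
    unfolding of_real_diff complex_norm_square by simp
  finally show "1 - (l1 + l2) * z + (l1 * l2) * z^2
      = (1 - ((l1 + l2) * cnj \<beta> / 2) / (1 + of_real (sqrt (1 - (cmod \<beta>)^2))))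
        * of_real (1 - (cmod z)^2)"
    unfolding r_def .
qed

lemma mem_pentablock_if_frob_sq:
  assumes "frob_sq A < 1 + (cmod (det A))^2" "cmod (det A) < 1"
  shows "pi_map A \<in> pentablock"
  unfolding pentablock_def unit_ball_mat_def using opnorm_lt_1_if_frob_sq[OF assms] by blast

lemma mem_pentablock_if_entries:
  fixes x y a b l1 l2 :: complex
  assumes "cmod l1 < 1" "cmod l2 < 1" "x + y = l1 + l2" "x * y - b * a = l1 * l2"
    and "(cmod x)^2 + (cmod b)^2 + (cmod a)^2 + (cmod y)^2
      < (cmod l1)^2 + (cmod l2)^2 + (1 - (cmod l1)^2) * (1 - (cmod l2)^2)"
  shows "(a, l1 + l2, l1 * l2) \<in> pentablock"
proof -
  define A :: cmat2
    where "A = (\<chi> i j. if i = 1 then (if j = 1 then x else b) else (if j = 1 then a else y))"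
  have entries: "A$1$1 = x" "A$1$2 = b" "A$2$1 = a" "A$2$2 = y"
    unfolding A_def by simp_all
  have det: "det A = l1 * l2"
    unfolding det_2 entries using assms(4) by simp
  have "frob_sq A < 1 + (cmod (det A))^2"
    using assms(5) unfolding frob_sq_def entries det
    by (simp add: norm_mult power_mult_distrib algebra_simps)
  moreover have "cmod (det A) < 1"
    unfolding det using assms(1,2) by (rule norm_mult_lt_1)
  ultimately have "pi_map A \<in> pentablock"
    by (rule mem_pentablock_if_frob_sq)
  then show ?thesis
    unfolding pi_map_def entries det assms(3) .
qed

lemma norm_sq_one_minus_cnj_mult:
  "(cmod (1 - cnj l2 * l1))^2 - (1 - (cmod l1)^2) * (1 - (cmod l2)^2) = (cmod (l2 - l1))^2"
  by (rule of_real_eq_iff[where 'a = complex, THEN iffD1])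
    (unfold of_real_diff of_real_mult complex_norm_square of_real_1, simp add: algebra_simps)

lemma exists_mult_one_minus_eq:
  fixes k :: real
  assumes "4 * k \<le> 1"
  shows "\<exists>\<theta>. \<theta> * (1 - \<theta>) = k"
proof
  define S where "S = sqrt (1 - 4 * k)"
  have "S^2 = 1 - 4 * k"
    unfolding S_def using assms by simp
  then show "(1 - S) / 2 * (1 - (1 - S) / 2) = k"
    by (simp add: field_simps power2_eq_square)
qed

text \<open>Moving the diagonal \<open>(\<lambda>\<^sub>1, \<lambda>\<^sub>2)\<close> by \<open>\<theta> d\<close> towards each other lowers
  \<open>\<bar>x\<bar>\<^sup>2 + \<bar>y\<bar>\<^sup>2\<close> by \<open>2 k \<bar>d\<bar>\<^sup>2\<close> and raises \<open>x y\<close> by \<open>k d\<^sup>2\<close>, which the off-diagonal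
  entry \<open>b\<close> compensates in the determinant.\<close>
lemma shifted_diagonal_entries:
  fixes l1 l2 a :: complex and \<theta> k :: real
  assumes "\<theta> * (1 - \<theta>) = k" "0 \<le> k" "a \<noteq> 0"
  defines "d \<equiv> l2 - l1"
  defines "x \<equiv> l1 + of_real \<theta> * d" and "y \<equiv> l2 - of_real \<theta> * d" and "b \<equiv> of_real k * d^2 / a"
  shows "x * y - b * a = l1 * l2"
    and "(cmod x)^2 + (cmod b)^2 + (cmod a)^2 + (cmod y)^2
      = (cmod l1)^2 + (cmod l2)^2 + (cmod a - k * (cmod d)^2 / cmod a)^2"
proof -
  have "x * y = l1 * l2 + of_real (\<theta> * (1 - \<theta>)) * d^2"
    unfolding x_def y_def d_def by (simp add: algebra_simps power2_eq_square)
  then show "x * y - b * a = l1 * l2"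
    using assms(3) by (simp add: assms(1) b_def)
  have "(cmod x)^2 + (cmod y)^2 = (cmod l1)^2 + (cmod l2)^2 - 2 * (k * (cmod d)^2)"
    unfolding x_def y_def d_def assms(1)[symmetric]
    by (rule of_real_eq_iff[where 'a = complex, THEN iffD1])
      (unfold of_real_diff of_real_add of_real_mult complex_norm_square of_real_1,
        simp add: algebra_simps)
  moreover have "cmod b = k * (cmod d)^2 / cmod a"
    unfolding b_def using assms(2) by (simp add: norm_mult norm_divide norm_power)
  then have "(cmod b)^2 = (k * (cmod d)^2 / cmod a)^2"
    by simp
  moreover have "(cmod a - k * (cmod d)^2 / cmod a)^2
      = (cmod a)^2 - 2 * (k * (cmod d)^2) + (k * (cmod d)^2 / cmod a)^2"
    using assms(3) by (simp add: power2_eq_square field_simps)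
  ultimately show "(cmod x)^2 + (cmod b)^2 + (cmod a)^2 + (cmod y)^2
      = (cmod l1)^2 + (cmod l2)^2 + (cmod a - k * (cmod d)^2 / cmod a)^2"
    by linarith
qed

lemma radius_excess_bound:
  fixes t c q :: real
  assumes "0 < t" "2 * t < c + q" "0 < q"
  defines "k \<equiv> (t / (c + q))^2"
  shows "4 * k \<le> 1" and "(t - k * (c^2 - q^2) / t)^2 < q^2"
proof -
  have cq: "0 < c + q"
    using assms(1,2) by linarith
  have "t / (c + q) \<le> 1 / 2"
    using assms(2) cq by (simp add: divide_le_eq)
  then have "(t / (c + q))^2 \<le> (1 / 2)^2"
    using assms(1) cq by (intro power_mono) auto
  then show "4 * k \<le> 1"
    unfolding k_def by (simp add: power2_eq_square mult.commute)
  have "k * (c^2 - q^2) / t = t * (c - q) / (c + q)"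
    unfolding k_def using assms(1) cq by (simp add: power2_eq_square square_diff_square_factored)
  then have "t - k * (c^2 - q^2) / t = 2 * t * q / (c + q)"
    using cq by (simp add: field_simps)
  moreover have "2 * t * q / (c + q) < q"
    using assms cq by (simp add: divide_less_eq)
  then have "(2 * t * q / (c + q))^2 < q^2"
    using assms(1,3) cq by (intro power_strict_mono) auto
  ultimately show "(t - k * (c^2 - q^2) / t)^2 < q^2"
    by simp
qed

text \<open>For \<open>a \<noteq> 0\<close> the witness comes from \<open>shifted_diagonal_entries\<close>, where
  \<open>\<bar>d\<bar>\<^sup>2 = c\<^sup>2 - q\<^sup>2\<close> for the two terms \<open>c\<close>, \<open>q\<close> of \<open>2 K\<close>, so that the Frobenius norm
  exceeds \<open>\<bar>\<lambda>\<^sub>1\<bar>\<^sup>2 + \<bar>\<lambda>\<^sub>2\<bar>\<^sup>2\<close> by less than \<open>q\<^sup>2 = (1 - \<bar>\<lambda>\<^sub>1\<bar>\<^sup>2)(1 - \<bar>\<lambda>\<^sub>2\<bar>\<^sup>2)\<close>.\<close>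
lemma mem_pentablock_if_norm_lt_radius:
  assumes l1: "cmod l1 < 1" and l2: "cmod l2 < 1" and a: "cmod a < pentablock_radius l1 l2"
  shows "(a, l1 + l2, l1 * l2) \<in> pentablock"
proof (cases "a = 0")
  case True
  have "0 < (1 - (cmod l1)^2) * (1 - (cmod l2)^2)"
    using l1 l2 by (intro mult_pos_pos one_minus_norm_sq_pos)
  then show ?thesis
    using True by (intro mem_pentablock_if_entries[OF l1 l2, of l1 l2 0]) simp_all
next
  case False
  define c q where "c = cmod (1 - cnj l2 * l1)"
    and "q = sqrt (1 - (cmod l1)^2) * sqrt (1 - (cmod l2)^2)"
  define k where "k = (cmod a / (c + q))^2"
  have q: "0 < q" "q^2 = (1 - (cmod l1)^2) * (1 - (cmod l2)^2)"
    using one_minus_norm_sq_pos[OF l1] one_minus_norm_sq_pos[OF l2]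
    by (simp_all add: q_def power_mult_distrib)
  have "0 < cmod a" "2 * cmod a < c + q"
    using False a unfolding pentablock_radius_def c_def q_def by simp_all
  note excess = radius_excess_bound[OF this q(1), folded k_def]
  then obtain \<theta> where \<theta>: "\<theta> * (1 - \<theta>) = k"
    using exists_mult_one_minus_eq by blast
  have "(cmod (l2 - l1))^2 = c^2 - q^2"
    using norm_sq_one_minus_cnj_mult[of l2 l1] q(2) unfolding c_def by linarith
  moreover have "0 \<le> k"
    unfolding k_def by simp
  note entries = shifted_diagonal_entries[OF \<theta> this False, of l1 l2, unfolded calculation]
  show ?thesis
    by (rule mem_pentablock_if_entries[OF l1 l2 _ entries(1)])
      (simp, insert excess(2) q(2), unfold entries(2), linarith)
qed

lemma one_minus_sum_plus_prod:
  "1 - (l1 + l2) * z + (l1 * l2) * z^2 = (1 - l1 * z) * (1 - l2 * (z :: complex))"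
  by (simp add: algebra_simps power2_eq_square)

lemma norm_lt_radius_if_mu_E_lt_1:
  assumes l1: "cmod l1 < 1" and l2: "cmod l2 < 1" and mu: "mu_E A < 1"
    and "A$1$1 + A$2$2 = l1 + l2" "det A = l1 * l2"
  shows "cmod (A$2$1) < pentablock_radius l1 l2"
proof -
  define z where "z = extremal_point (symmetrized_beta (l1 + l2) (l1 * l2))"
  have z: "cmod z < 1"
    "pentablock_radius l1 l2 * (1 - (cmod z)^2) = cmod ((1 - l1 * z) * (1 - l2 * z))"
    using extremal_point_properties[OF l1 l2 refl z_def] by simp_all
  have "cmod (A$2$1) * (1 - (cmod z)^2) < cmod (1 - (A$1$1 + A$2$2) * z + det A * z^2)"
    using mu_E_lt_1_imp_bound[OF mu] z(1) by simp
  also have "\<dots> = pentablock_radius l1 l2 * (1 - (cmod z)^2)"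
    unfolding assms(4,5) one_minus_sum_plus_prod z(2) ..
  finally show ?thesis
    using one_minus_norm_sq_pos[OF z(1)] by simp
qed

lemma exists_sum_prod_eq: "\<exists>m1 m2 :: complex. m1 + m2 = s \<and> m1 * m2 = p"
proof -
  define w where "w = csqrt (s^2 - 4 * p)"
  have "w^2 = s^2 - 4 * p"
    unfolding w_def by simp
  then have "(s + w) / 2 + (s - w) / 2 = s \<and> ((s + w) / 2) * ((s - w) / 2) = p"
    by (simp add: field_simps power2_eq_square)
  then show ?thesis
    by blast
qed

text \<open>A root \<open>m\<close> outside the disc would make \<open>1 - tr A z + det A z\<^sup>2\<close> vanish at \<open>z = 1/m\<close>,
  contradicting the bound for \<open>\<mu>\<^sub>E(A) < 1\<close>.\<close>
lemma norm_root_lt_1_if_mu_E_lt_1: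
  assumes mu: "mu_E A < 1" and "A$1$1 + A$2$2 = m1 + m2" "det A = m1 * m2"
  shows "cmod m1 < 1"
proof (rule ccontr)
  assume "\<not> cmod m1 < 1"
  then have m1: "1 \<le> cmod m1"
    by simp
  define z where "z = 1 / m1"
  have z: "cmod z \<le> 1"
    unfolding z_def using m1 by (simp add: norm_divide divide_le_eq)
  have "1 - (A$1$1 + A$2$2) * z + det A * z^2 = (1 - m1 * z) * (1 - m2 * z)"
    unfolding assms(2,3) one_minus_sum_plus_prod ..
  also have "\<dots> = 0"
    unfolding z_def using m1 by auto
  finally have "cmod (A$2$1) * (1 - (cmod z)^2) < 0"
    using mu_E_lt_1_imp_bound[OF mu z] by simp
  moreover have "0 \<le> cmod (A$2$1) * (1 - (cmod z)^2)"
    using z by (simp add: abs_square_le_1)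
  ultimately show False
    by simp
qed

lemma pentablock_subset_pentablock_mu: "pentablock \<subseteq> pentablock_mu"
  unfolding pentablock_def pentablock_mu_def unit_ball_mat_def
  using mu_E_lt_1_if_opnorm_lt_1 by blast

lemma pentablock_mu_subset_pentablock: "pentablock_mu \<subseteq> pentablock"
proof
  fix v
  assume "v \<in> pentablock_mu"
  then obtain A where mu: "mu_E A < 1" and v: "v = pi_map A"
    unfolding pentablock_mu_def by blast
  obtain m1 m2 where m: "A$1$1 + A$2$2 = m1 + m2" "det A = m1 * m2"
    using exists_sum_prod_eq by metis
  have m1: "cmod m1 < 1"
    using mu m by (rule norm_root_lt_1_if_mu_E_lt_1)
  have m2: "cmod m2 < 1"
    using mu m by (intro norm_root_lt_1_if_mu_E_lt_1[of A m2 m1]) (simp_all add: ac_simps)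
  have "(A$2$1, m1 + m2, m1 * m2) \<in> pentablock"
    using m1 m2 norm_lt_radius_if_mu_E_lt_1[OF m1 m2 mu m]
    by (rule mem_pentablock_if_norm_lt_radius)
  then show "v \<in> pentablock"
    unfolding v pi_map_def m .
qed

lemma pentablock_eq_pentablock_mu: "pentablock = pentablock_mu"
  using pentablock_subset_pentablock_mu pentablock_mu_subset_pentablock by blast

lemma mem_pentablock_iff:
  assumes l1: "cmod l1 < 1" and l2: "cmod l2 < 1"
  shows "(a, l1 + l2, l1 * l2) \<in> pentablock \<longleftrightarrow> cmod a < pentablock_radius l1 l2"
proof
  assume "(a, l1 + l2, l1 * l2) \<in> pentablock"
  then obtain A where "mu_E A < 1" "pi_map A = (a, l1 + l2, l1 * l2)"
    unfolding pentablock_eq_pentablock_mu pentablock_mu_def by auto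
  then show "cmod a < pentablock_radius l1 l2"
    using norm_lt_radius_if_mu_E_lt_1[OF l1 l2, of A] by (simp add: pi_map_def)
next
  assume "cmod a < pentablock_radius l1 l2"
  then show "(a, l1 + l2, l1 * l2) \<in> pentablock"
    using l1 l2 mem_pentablock_if_norm_lt_radius by blast
qed

lemma norm_Psi:
  assumes "cmod z < 1"
  shows "cmod (Psi z a s p) = cmod a * (1 - (cmod z)^2) / cmod (1 - s * z + p * z^2)"
proof -
  have "1 - complex_of_real ((cmod z)^2) = of_real (1 - (cmod z)^2)"
    by simp
  then show ?thesis
    using one_minus_norm_sq_pos[OF assms]
    unfolding Psi_def norm_divide norm_mult by (simp only: norm_of_real abs_of_pos)
qed

lemma SUP_norm_Psi:
  assumes l1: "cmod l1 < 1" and l2: "cmod l2 < 1"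
  shows "(SUP z\<in>ball 0 1. cmod (Psi z a (l1 + l2) (l1 * l2))) = cmod a / pentablock_radius l1 l2"
proof -
  define K where "K = pentablock_radius l1 l2"
  have K: "0 < K"
    unfolding K_def using l1 l2 by (rule pentablock_radius_pos)
  have Psi: "cmod (Psi z a (l1 + l2) (l1 * l2))
      = cmod a * (1 - (cmod z)^2) / cmod ((1 - l1 * z) * (1 - l2 * z))" if "cmod z < 1" for z
    unfolding norm_Psi[OF that] one_minus_sum_plus_prod ..
  define z0 where "z0 = extremal_point (symmetrized_beta (l1 + l2) (l1 * l2))"
  have z0: "cmod z0 < 1" "K * (1 - (cmod z0)^2) = cmod ((1 - l1 * z0) * (1 - l2 * z0))"
    using extremal_point_properties[OF l1 l2 refl z0_def] unfolding K_def by simp_all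
  show ?thesis
    unfolding image_image[symmetric] K_def[symmetric]
  proof (rule cSup_eq_maximum)
    have "cmod (Psi z0 a (l1 + l2) (l1 * l2)) = cmod a / K"
      unfolding Psi[OF z0(1)] z0(2)[symmetric] using one_minus_norm_sq_pos[OF z0(1)] by simp
    then show "cmod a / K \<in> (\<lambda>z. cmod (Psi z a (l1 + l2) (l1 * l2))) ` ball 0 1"
      using z0(1) by (intro image_eqI[where x = z0]) simp_all
  next
    fix x
    assume "x \<in> (\<lambda>z. cmod (Psi z a (l1 + l2) (l1 * l2))) ` ball 0 1"
    then obtain z where z: "cmod z < 1" and x: "x = cmod (Psi z a (l1 + l2) (l1 * l2))"
      by auto
    have "0 < K * (1 - (cmod z)^2)"
      using K one_minus_norm_sq_pos[OF z] by simp
    moreover have "K * (1 - (cmod z)^2) \<le> cmod ((1 - l1 * z) * (1 - l2 * z))"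
      unfolding K_def using l1 l2 z by (intro pentablock_radius_le) auto
    moreover have "0 \<le> cmod a * (1 - (cmod z)^2)"
      using one_minus_norm_sq_pos[OF z] by simp
    ultimately have "cmod a * (1 - (cmod z)^2) / cmod ((1 - l1 * z) * (1 - l2 * z))
        \<le> cmod a * (1 - (cmod z)^2) / (K * (1 - (cmod z)^2))"
      by (intro divide_left_mono) (auto intro!: mult_pos_pos)
    then show "x \<le> cmod a / K"
      unfolding x Psi[OF z] using one_minus_norm_sq_pos[OF z] by simp
  qed
qed

lemma pentablock_radius_eq_norm:
  assumes l1: "cmod l1 < 1" and l2: "cmod l2 < 1"
    and \<beta>: "\<beta> = symmetrized_beta (l1 + l2) (l1 * l2)"
  shows "pentablock_radius l1 l2
    = cmod (1 - ((l1 + l2) * cnj \<beta> / 2) / (1 + of_real (sqrt (1 - (cmod \<beta>)^2))))"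
proof -
  define z where "z = extremal_point \<beta>"
  note z = extremal_point_properties[OF l1 l2 \<beta> z_def]
  have "pentablock_radius l1 l2 * (1 - (cmod z)^2)
      = cmod (1 - ((l1 + l2) * cnj \<beta> / 2) / (1 + of_real (sqrt (1 - (cmod \<beta>)^2))))
        * (1 - (cmod z)^2)"
    using z(2) one_minus_norm_sq_pos[OF z(1)]
    unfolding one_minus_sum_plus_prod[symmetric] z(3) norm_mult norm_of_real by simp
  then show ?thesis
    using one_minus_norm_sq_pos[OF z(1)] by simp
qed

theorem theorem5p2:
  fixes l1 l2 a s p \<beta> :: complex
  assumes "cmod l1 < 1" and "cmod l2 < 1"
  defines "s \<equiv> l1 + l2"
      and "p \<equiv> l1 * l2"
      and "\<beta> \<equiv> (s - cnj s * p) / (1 - of_real ((cmod p)^2))"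
  shows "((a, s, p) \<in> pentablock \<longleftrightarrow> (a, s, p) \<in> pentablock_mu)
       \<and> ((a, s, p) \<in> pentablock_mu \<longleftrightarrow>
            cmod a < cmod (1 - (s * cnj \<beta> / 2) / (1 + of_real (sqrt (1 - (cmod \<beta>)^2)))))
       \<and> ((a, s, p) \<in> pentablock \<longleftrightarrow>
            cmod a < cmod (1 - cnj l2 * l1) / 2
                     + sqrt (1 - (cmod l1)^2) * sqrt (1 - (cmod l2)^2) / 2)
       \<and> ((a, s, p) \<in> pentablock \<longleftrightarrow>
            (SUP z\<in>ball 0 1. cmod (Psi z a s p)) < 1)
       \<and> pentablock = pentablock_mu"
proof -
  have fibre: "(a, s, p) \<in> pentablock \<longleftrightarrow> cmod a < pentablock_radius l1 l2"
    unfolding s_def p_def using assms(1,2) by (rule mem_pentablock_iff)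
  have "\<beta> = symmetrized_beta s p"
    unfolding \<beta>_def symmetrized_beta_def ..
  then have radius: "pentablock_radius l1 l2
      = cmod (1 - (s * cnj \<beta> / 2) / (1 + of_real (sqrt (1 - (cmod \<beta>)^2))))"
    unfolding s_def p_def using assms(1,2) by (intro pentablock_radius_eq_norm)
  have "(SUP z\<in>ball 0 1. cmod (Psi z a s p)) < 1 \<longleftrightarrow> cmod a < pentablock_radius l1 l2"
    unfolding s_def p_def SUP_norm_Psi[OF assms(1,2)]
    using pentablock_radius_pos[OF assms(1,2)] by (simp add: divide_less_eq)
  then show ?thesis
    using fibre radius pentablock_eq_pentablock_mu unfolding pentablock_radius_def by simp
qed

end
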